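(* Let $f:\mathbb{N}\to\mathbb{R}$ with $f(1)=1$ be multiplicative (i.e. $f(mn)=f(m)f(n)$ for coprime $m,n$). Assume there exist $A>0$ and $c\in(0,1)$ such that $|f(n)|\leq A c^n$ for all $n\geq2$. Then $$|f^{-1}(n)| \leq \left(\frac{A}{A+1}\right)^{\omega(n)} (A+1)^{\Omega(n)} n^{\frac{3\ln c}{\ln 3}}, \quad n\geq 2.$$
   Context: $f^{-1}$ denotes the Dirichlet inverse of $f$: the arithmetic function with $\sum_{d\mid n} f(n/d) f^{-1}(d)=\varepsilon(n)$ for all $n$, where $\varepsilon(1)=1$ and $\varepsilon(n)=0$ for $n\ge2$. $\omega(n)$ is the number of distinct prime factors of $n$ and $\Omega(n)$ the number of prime factors counted with multiplicity. *)

theory Defs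
  imports "HOL-Analysis.Analysis" "HOL-Computational_Algebra.Primes"
begin

text \<open>Dirichlet inverse of an arithmetic function f with f 1 \<noteq> 0, defined by the
  standard recursion derived from sum over d dvd n of f(n div d) * g(d) = [n = 1].
  The value at 0 is irrelevant (set to 0).\<close>
function dirichlet_inverse :: "(nat \<Rightarrow> real) \<Rightarrow> nat \<Rightarrow> real" where
  "dirichlet_inverse f n =
     (if n = 0 then 0
      else if n = 1 then 1 / f 1
      else - (1 / f 1) * (\<Sum>d \<in> {d. d dvd n \<and> d < n}.
               f (n div d) * dirichlet_inverse f d))"
  by auto
termination
  by (relation "Wellfounded.measure snd") auto

definition omega :: "nat \<Rightarrow> nat" where
  "omega n = card (prime_factors n)"

definition Omega :: "nat \<Rightarrow> nat" where
  "Omega n = size (prime_factorization n)"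

end

(*
  The Dirichlet inverse g of a multiplicative f with f 1 = 1 is again multiplicative,
  so it suffices to bound g on prime powers. There
  g(p^k) = -(f(p^k) g(1) + f(p^(k-1)) g(p) + ... + f(p) g(p^(k-1))), and since
  |f(p^i)| <= A c^(p^i) <= A (c^p)^i, induction on k gives |g(p^k)| <= B_k (c^p)^k with
  B_0 = 1 and B_k = A (B_0 + ... + B_(k-1)) = A (A+1)^(k-1). Finally p^3 <= 3^p yields
  c^p <= p^(3 ln c / ln 3), and the bound follows by multiplying over the prime
  factorisation of n.
*)

theory Submission
  imports Defs
begin

declare dirichlet_inverse.simps [simp del]

lemma dirichlet_inverse_0 [simp]: "dirichlet_inverse f 0 = 0"
  by (simp add: dirichlet_inverse.simps)

lemma dirichlet_inverse_Suc_0 [simp]: "dirichlet_inverse f (Suc 0) = 1 / f 1"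
  by (simp add: dirichlet_inverse.simps)

lemma dirichlet_inverse_convolution:
  assumes f1: "f 1 \<noteq> 0" and n: "n > 0"
  shows "(\<Sum>d | d dvd n. f (n div d) * dirichlet_inverse f d) = (if n = 1 then 1 else 0)"
proof (cases "n = 1")
  case True
  then have "{d. d dvd n} = {1}" by auto
  then show ?thesis using True f1 by simp
next
  case False
  let ?S = "(\<Sum>d | d dvd n \<and> d < n. f (n div d) * dirichlet_inverse f d)"
  have "finite {d. d dvd n \<and> d < n}" by simp
  moreover have "{d. d dvd n} = insert n {d. d dvd n \<and> d < n}"
    using n by (auto dest: dvd_imp_le)
  moreover have "dirichlet_inverse f n = - (1 / f 1) * ?S"
    using False n by (simp add: dirichlet_inverse.simps)
  ultimately show ?thesis using False f1 n by simp
qed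

lemma sum_divisors_coprime_mult:
  fixes F :: "nat \<Rightarrow> 'a :: comm_monoid_add"
  assumes cop: "coprime m n" and "m > 0" "n > 0"
  shows "(\<Sum>d | d dvd m * n. F d) = (\<Sum>(a, b) \<in> {a. a dvd m} \<times> {b. b dvd n}. F (a * b))"
proof -
  have inj: "inj_on (\<lambda>(a, b). a * b) ({a. a dvd m} \<times> {b. b dvd n})"
  proof (rule inj_onI, clarsimp)
    fix a b a' b' :: nat
    assume ab: "a dvd m" "b dvd n" "a' dvd m" "b' dvd n" and eq: "a * b = a' * b'"
    have "coprime a b'" "coprime a' b" using cop ab by (meson coprime_divisors)+
    then have "a dvd a'" "a' dvd a"
      using eq by (metis coprime_dvd_mult_left_iff dvd_triv_left)+
    then have "a = a'" by (rule dvd_antisym)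
    moreover have "a \<noteq> 0" using ab \<open>m > 0\<close> by auto
    ultimately show "a = a' \<and> b = b'" using eq by simp
  qed
  have img: "{d. d dvd m * n} = (\<lambda>(a, b). a * b) ` ({a. a dvd m} \<times> {b. b dvd n})"
    by (auto intro: mult_dvd_mono dest: division_decomp)
  show ?thesis by (rule sum.reindex_cong[OF inj img]) auto
qed

lemma multiplicative_div_mult:
  fixes f :: "nat \<Rightarrow> 'a :: times"
  assumes mult: "\<And>m n. coprime m n \<Longrightarrow> f (m * n) = f m * f n"
    and cop: "coprime m n" and "a dvd m" "b dvd n"
  shows "f (m * n div (a * b)) = f (m div a) * f (n div b)"
proof -
  have "m div a dvd m" "n div b dvd n"
    using \<open>a dvd m\<close> \<open>b dvd n\<close> by (metis dvd_div_mult_self dvd_triv_left)+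
  then have "coprime (m div a) (n div b)" using cop by (meson coprime_divisors)
  then have "f (m div a * (n div b)) = f (m div a) * f (n div b)" by (rule mult)
  then show ?thesis using \<open>a dvd m\<close> \<open>b dvd n\<close> by (simp add: div_mult_div_if_dvd)
qed

lemma dirichlet_inverse_mult_coprime:
  fixes f :: "nat \<Rightarrow> real"
  assumes f1: "f 1 = 1" and mult: "\<And>m n. coprime m n \<Longrightarrow> f (m * n) = f m * f n"
  shows "coprime m n \<Longrightarrow>
    dirichlet_inverse f (m * n) = dirichlet_inverse f m * dirichlet_inverse f n"
proof (induction "m * n" arbitrary: m n rule: less_induct)
  case less
  let ?g = "dirichlet_inverse f"
  show ?case
  proof (cases "m \<le> 1 \<or> n \<le> 1")
    case True
    then consider "m = 0" | "m = 1" | "n = 0" | "n = 1" by linarith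
    then show ?thesis using less.prems f1 by cases simp_all
  next
    case False
    then have "m > 1" "n > 1" by auto
    define D where "D = {a. a dvd m} \<times> {b. b dvd n}"
    let ?T = "\<lambda>(a, b). f (m div a) * ?g a * (f (n div b) * ?g b)"
    have finD: "finite D" and mnD: "(m, n) \<in> D"
      using \<open>m > 1\<close> \<open>n > 1\<close> by (auto simp: D_def)
    \<comment> \<open>Divisor pairs other than \<open>(m, n)\<close> have a smaller product, so the
      induction hypothesis factors their summands.\<close>
    have off_diag: "f (m * n div (a * b)) * ?g (a * b) = ?T (a, b)"
      if "(a, b) \<in> D - {(m, n)}" for a b
    proof -
      from that have ab: "a dvd m" "b dvd n" "(a, b) \<noteq> (m, n)" by (auto simp: D_def)
      then have "a \<le> m" "b \<le> n" "a > 0" "b > 0"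
        using \<open>m > 1\<close> \<open>n > 1\<close> by (auto intro: dvd_imp_le intro!: gr0I)
      moreover from this have "a < m \<or> b < n" using ab(3) by auto
      ultimately have "a * b < m * n"
        by (auto intro: mult_less_le_imp_less mult_le_less_imp_less)
      moreover have "coprime a b" using less.prems ab by (meson coprime_divisors)
      ultimately show ?thesis
        using less.hyps[of a b] multiplicative_div_mult[OF mult less.prems ab(1,2)] by simp
    qed
    have "0 = (\<Sum>d | d dvd m * n. f (m * n div d) * ?g d)"
      using dirichlet_inverse_convolution[of f "m * n"] f1 \<open>m > 1\<close> \<open>n > 1\<close> by simp
    also have "\<dots> = (\<Sum>(a, b) \<in> D. f (m * n div (a * b)) * ?g (a * b))"
      unfolding D_def using less.prems \<open>m > 1\<close> \<open>n > 1\<close> by (simp add: sum_divisors_coprime_mult)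
    also have "\<dots> = ?g (m * n) + (\<Sum>(a, b) \<in> D - {(m, n)}. f (m * n div (a * b)) * ?g (a * b))"
      using f1 \<open>m > 1\<close> \<open>n > 1\<close> by (simp add: sum.remove[OF finD mnD])
    also have "\<dots> = ?g (m * n) + sum ?T (D - {(m, n)})"
      using off_diag by (auto intro!: sum.cong)
    also have "\<dots> = ?g (m * n) - ?g m * ?g n + sum ?T D"
      using f1 \<open>m > 1\<close> \<open>n > 1\<close> by (simp add: sum.remove[OF finD mnD])
    also have "sum ?T D
        = (\<Sum>a | a dvd m. f (m div a) * ?g a) * (\<Sum>b | b dvd n. f (n div b) * ?g b)"
      unfolding D_def by (simp add: sum_product sum.cartesian_product)
    also have "\<dots> = 0"
      using dirichlet_inverse_convolution[of f m] f1 \<open>m > 1\<close> by simp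
    finally show ?thesis by simp
  qed
qed

lemma dirichlet_inverse_prod_prime_powers:
  fixes f :: "nat \<Rightarrow> real"
  assumes f1: "f 1 = 1" and mult: "\<And>m n. coprime m n \<Longrightarrow> f (m * n) = f m * f n"
  shows "finite P \<Longrightarrow> (\<forall>p\<in>P. prime p) \<Longrightarrow>
    dirichlet_inverse f (\<Prod>p\<in>P. p ^ k p) = (\<Prod>p\<in>P. dirichlet_inverse f (p ^ k p))"
proof (induction P rule: finite_induct)
  case empty
  then show ?case using f1 by simp
next
  case (insert q P)
  have "coprime q (p ^ k p)" if "p \<in> P" for p
    using insert that by (metis coprime_power_right_iff insert_iff primes_coprime)
  then have "coprime (q ^ k q) (\<Prod>p\<in>P. p ^ k p)" by (simp add: prod_coprime_right)
  then show ?case using insert dirichlet_inverse_mult_coprime[OF f1 mult] by simp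
qed

lemma dirichlet_inverse_prime_factorization:
  fixes f :: "nat \<Rightarrow> real"
  assumes f1: "f 1 = 1" and mult: "\<And>m n. coprime m n \<Longrightarrow> f (m * n) = f m * f n"
    and "n > 0"
  shows "dirichlet_inverse f n
    = (\<Prod>p\<in>prime_factors n. dirichlet_inverse f (p ^ multiplicity p n))"
proof -
  have "dirichlet_inverse f n = dirichlet_inverse f (\<Prod>p\<in>prime_factors n. p ^ multiplicity p n)"
    using prime_factorization_nat[OF \<open>n > 0\<close>] by (rule arg_cong)
  also have "\<dots> = (\<Prod>p\<in>prime_factors n. dirichlet_inverse f (p ^ multiplicity p n))"
    by (rule dirichlet_inverse_prod_prime_powers[OF f1 mult]) auto
  finally show ?thesis .
qed

lemma dirichlet_inverse_prime_power:
  assumes "prime p" and "k > 0"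
  shows "dirichlet_inverse f (p ^ k)
    = - (1 / f 1) * (\<Sum>j<k. f (p ^ (k - j)) * dirichlet_inverse f (p ^ j))"
proof -
  have p1: "p > 1" using \<open>prime p\<close> prime_gt_1_nat by blast
  have divisors: "{d. d dvd p ^ k \<and> d < p ^ k} = (\<lambda>j. p ^ j) ` {..<k}"
  proof
    show "{d. d dvd p ^ k \<and> d < p ^ k} \<subseteq> (\<lambda>j. p ^ j) ` {..<k}"
    proof clarify
      fix d assume "d dvd p ^ k" "d < p ^ k"
      then obtain i where "i \<le> k" "d = p ^ i" using divides_primepow_nat[OF \<open>prime p\<close>] by blast
      moreover have "i \<noteq> k" using \<open>d < p ^ k\<close> \<open>d = p ^ i\<close> by auto
      ultimately show "d \<in> (\<lambda>j. p ^ j) ` {..<k}" by auto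
    qed
    show "(\<lambda>j. p ^ j) ` {..<k} \<subseteq> {d. d dvd p ^ k \<and> d < p ^ k}"
      using p1 by (auto intro: le_imp_power_dvd power_strict_increasing)
  qed
  have inj: "inj_on (\<lambda>j. p ^ j) {..<k}" using p1 by (auto intro: inj_onI)
  have "dirichlet_inverse f (p ^ k)
      = - (1 / f 1) * (\<Sum>d \<in> {d. d dvd p ^ k \<and> d < p ^ k}. f (p ^ k div d) * dirichlet_inverse f d)"
    using p1 \<open>k > 0\<close> by (subst dirichlet_inverse.simps) simp
  also have "\<dots> = - (1 / f 1) * (\<Sum>j<k. f (p ^ (k - j)) * dirichlet_inverse f (p ^ j))"
    using p1 by (simp add: divisors sum.reindex[OF inj] power_diff)
  finally show ?thesis .
qed

definition inverse_bound_coeff :: "real \<Rightarrow> nat \<Rightarrow> real" where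
  "inverse_bound_coeff A k = (if k = 0 then 1 else A * (A + 1) ^ (k - 1))"

lemma sum_inverse_bound_coeff:
  "k > 0 \<Longrightarrow> A * (\<Sum>j<k. inverse_bound_coeff A j) = inverse_bound_coeff A k"
proof (induction k)
  case (Suc k)
  show ?case
  proof (cases "k = 0")
    case False
    then have "A * (\<Sum>j<Suc k. inverse_bound_coeff A j)
        = inverse_bound_coeff A k + A * inverse_bound_coeff A k"
      using Suc by (simp add: distrib_left)
    also have "\<dots> = inverse_bound_coeff A (Suc k)"
      using False by (cases k) (simp_all add: inverse_bound_coeff_def algebra_simps)
    finally show ?thesis .
  qed (simp add: inverse_bound_coeff_def)
qed simp

lemma abs_dirichlet_inverse_prime_power_le:
  fixes f :: "nat \<Rightarrow> real"
  assumes f1: "f 1 = 1" and "prime p" and "A \<ge> 0" and "q \<ge> 0"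
    and bound: "\<And>j. j > 0 \<Longrightarrow> \<bar>f (p ^ j)\<bar> \<le> A * q ^ j"
  shows "\<bar>dirichlet_inverse f (p ^ k)\<bar> \<le> inverse_bound_coeff A k * q ^ k"
proof (induction k rule: less_induct)
  case (less k)
  show ?case
  proof (cases "k = 0")
    case False
    then have "k > 0" by simp
    have "\<bar>dirichlet_inverse f (p ^ k)\<bar> = \<bar>\<Sum>j<k. f (p ^ (k - j)) * dirichlet_inverse f (p ^ j)\<bar>"
      using dirichlet_inverse_prime_power[OF \<open>prime p\<close> \<open>k > 0\<close>] f1 by simp
    also have "\<dots> \<le> (\<Sum>j<k. \<bar>f (p ^ (k - j))\<bar> * \<bar>dirichlet_inverse f (p ^ j)\<bar>)"
      by (rule order_trans[OF sum_abs]) (simp add: abs_mult)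
    also have "\<dots> \<le> (\<Sum>j<k. A * q ^ (k - j) * (inverse_bound_coeff A j * q ^ j))"
      using less bound \<open>A \<ge> 0\<close> \<open>q \<ge> 0\<close> by (intro sum_mono mult_mono) auto
    also have "\<dots> = (\<Sum>j<k. A * inverse_bound_coeff A j * q ^ k)"
      by (intro sum.cong refl) (simp add: mult_ac flip: power_add)
    also have "\<dots> = A * (\<Sum>j<k. inverse_bound_coeff A j) * q ^ k"
      by (simp add: sum_distrib_left sum_distrib_right)
    also have "\<dots> = inverse_bound_coeff A k * q ^ k"
      using sum_inverse_bound_coeff[OF \<open>k > 0\<close>] by simp
    finally show ?thesis .
  qed (use f1 in \<open>simp add: inverse_bound_coeff_def\<close>)
qed

lemma cube_le_three_power: "n ^ 3 \<le> (3 :: nat) ^ n"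
proof (induction n rule: less_induct)
  case (less n)
  show ?case
  proof (cases "n \<le> 3")
    case True
    then show ?thesis by (auto simp: le_Suc_eq numeral_3_eq_3)
  next
    case False
    then obtain m where m: "n = Suc m" "m \<ge> 3" by (cases n) auto
    have "Suc m ^ 3 = m ^ 3 + 3 * m ^ 2 + 3 * m + 1" by (simp add: power3_eq_cube power2_eq_square algebra_simps)
    also have "\<dots> \<le> 3 * m ^ 3"
    proof -
      have "3 * m ^ 2 \<le> m ^ 3" and "9 * m \<le> m ^ 3"
        using m(2) mult_le_mono1[of 3 m "m * m"] mult_le_mono1[of 9 "m * m" m] mult_le_mono[of 3 m 3 m]
        by (simp_all add: power3_eq_cube power2_eq_square)
      then show ?thesis using m(2) by linarith
    qed
    also have "\<dots> \<le> 3 * 3 ^ m" using less m by simp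
    finally show ?thesis using m by simp
  qed
qed

lemma power_le_powr_log_3:
  fixes c :: real
  assumes "0 < c" "c \<le> 1" "n > 0"
  shows "c ^ n \<le> real n powr (3 * ln c / ln 3)"
proof -
  have "ln (real n ^ 3) \<le> ln (3 ^ n)"
    using cube_le_three_power[of n] \<open>n > 0\<close> by (simp flip: of_nat_power)
  then have "3 * ln (real n) / ln 3 \<le> n" by (simp add: ln_realpow divide_le_eq)
  then have "n * ln c \<le> (3 * ln (real n) / ln 3) * ln c"
    using \<open>0 < c\<close> \<open>c \<le> 1\<close> by (intro mult_right_mono_neg) auto
  also have "\<dots> = ln (real n) * (3 * ln c / ln 3)" by simp
  finally have "ln (c ^ n) \<le> ln (real n) * (3 * ln c / ln 3)"
    using \<open>0 < c\<close> by (simp add: ln_realpow)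
  then have "exp (ln (c ^ n)) \<le> exp (ln (real n) * (3 * ln c / ln 3))" by simp
  then show ?thesis
    using \<open>0 < c\<close> \<open>n > 0\<close> by (simp add: powr_def mult.commute)
qed

lemma mult_le_power: "(2 :: nat) \<le> p \<Longrightarrow> j * p \<le> p ^ j"
proof (cases j)
  case (Suc i)
  assume "2 \<le> p"
  then have "Suc i * p \<le> p ^ i * p" by (intro mult_le_mono1 Suc_leI power_gt_expt) auto
  then show ?thesis using Suc by (simp add: mult.commute)
qed simp

lemma abs_dirichlet_inverse_prime_power_powr:
  fixes f :: "nat \<Rightarrow> real" and A c :: real
  assumes f1: "f 1 = 1" and A: "A > 0" and c: "0 < c" "c < 1"
    and bound: "\<And>n. n \<ge> 2 \<Longrightarrow> \<bar>f n\<bar> \<le> A * c ^ n"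
    and "prime p" "k > 0"
  shows "\<bar>dirichlet_inverse f (p ^ k)\<bar>
    \<le> A / (A + 1) * (A + 1) ^ k * real (p ^ k) powr (3 * ln c / ln 3)"
proof -
  define e where "e = 3 * ln c / ln 3"
  have p2: "p \<ge> 2" using \<open>prime p\<close> prime_ge_2_nat by blast
  have f_prime_power: "\<bar>f (p ^ j)\<bar> \<le> A * (c ^ p) ^ j" if "j > 0" for j
  proof -
    have "2 \<le> p ^ j" using p2 that self_le_power[of p j] by simp
    then have "\<bar>f (p ^ j)\<bar> \<le> A * c ^ (p ^ j)" by (rule bound)
    also have "\<dots> \<le> A * c ^ (j * p)"
      using mult_le_power[OF p2, of j] A c by (intro mult_left_mono power_decreasing) auto
    finally show ?thesis by (simp add: power_mult[of c p j, symmetric] mult.commute)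
  qed
  have "c ^ p \<le> real p powr e"
    unfolding e_def using c p2 by (intro power_le_powr_log_3) auto
  then have cp: "(c ^ p) ^ k \<le> (real p powr e) ^ k"
    using c by (intro power_mono) auto
  have "\<bar>dirichlet_inverse f (p ^ k)\<bar> \<le> inverse_bound_coeff A k * (c ^ p) ^ k"
    using abs_dirichlet_inverse_prime_power_le[OF f1 \<open>prime p\<close> _ _ f_prime_power] A c by simp
  also have "\<dots> \<le> inverse_bound_coeff A k * (real p powr e) ^ k"
    using cp A by (intro mult_left_mono) (simp_all add: inverse_bound_coeff_def)
  also have "inverse_bound_coeff A k = A / (A + 1) * (A + 1) ^ k"
    using A \<open>k > 0\<close> by (cases k) (simp_all add: inverse_bound_coeff_def)
  also have "(real p powr e) ^ k = real (p ^ k) powr e"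
    using p2 by (simp add: powr_powr powr_power powr_realpow [symmetric] mult.commute)
  finally show ?thesis unfolding e_def .
qed

lemma prod_prime_factors_omega_Omega:
  fixes a b e :: real
  assumes "n > 0"
  shows "(\<Prod>p\<in>prime_factors n. a * b ^ multiplicity p n * real (p ^ multiplicity p n) powr e)
    = a ^ omega n * b ^ Omega n * real n powr e"
proof -
  have "Omega n = (\<Sum>p\<in>prime_factors n. multiplicity p n)"
    unfolding Omega_def size_multiset_overloaded_eq
    by (intro sum.cong refl) (simp add: count_prime_factorization_prime in_prime_factors_imp_prime)
  then have "(\<Prod>p\<in>prime_factors n. b ^ multiplicity p n) = b ^ Omega n"
    by (simp add: power_sum)
  moreover have "(\<Prod>p\<in>prime_factors n. real (p ^ multiplicity p n)) = real n"
    using prime_factorization_nat[OF assms] by (metis of_nat_prod)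
  ultimately show ?thesis
    by (simp add: omega_def prod.distrib flip: prod_powr_distrib)
qed

theorem proposition3p6:
  fixes f :: "nat \<Rightarrow> real" and A c :: real
  assumes f1: "f 1 = 1"
    and mult: "\<And>m n. coprime m n \<Longrightarrow> f (m * n) = f m * f n"
    and A: "A > 0" and c0: "0 < c" and c1: "c < 1"
    and bound: "\<And>n. n \<ge> 2 \<Longrightarrow> \<bar>f n\<bar> \<le> A * c ^ n"
  shows "\<forall>n::nat. n \<ge> 2 \<longrightarrow>
    \<bar>dirichlet_inverse f n\<bar> \<le> (A / (A + 1)) ^ omega n * (A + 1) ^ Omega n
        * real n powr (3 * ln c / ln 3)"
proof (intro allI impI)
  fix n :: nat
  assume "n \<ge> 2"
  define e where "e = 3 * ln c / ln 3"
  have "\<bar>dirichlet_inverse f n\<bar>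
      = (\<Prod>p\<in>prime_factors n. \<bar>dirichlet_inverse f (p ^ multiplicity p n)\<bar>)"
    using dirichlet_inverse_prime_factorization[OF f1 mult, of n] \<open>n \<ge> 2\<close> by (simp add: abs_prod)
  also have "\<dots> \<le> (\<Prod>p\<in>prime_factors n.
      A / (A + 1) * (A + 1) ^ multiplicity p n * real (p ^ multiplicity p n) powr e)"
    unfolding e_def using abs_dirichlet_inverse_prime_power_powr[OF f1 A c0 c1 bound]
    by (intro prod_mono) (auto simp: prime_factors_multiplicity)
  also have "\<dots> = (A / (A + 1)) ^ omega n * (A + 1) ^ Omega n * real n powr e"
    using \<open>n \<ge> 2\<close> by (intro prod_prime_factors_omega_Omega) simp
  finally show "\<bar>dirichlet_inverse f n\<bar>
      \<le> (A / (A + 1)) ^ omega n * (A + 1) ^ Omega n * real n powr (3 * ln c / ln 3)"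
    unfolding e_def .
qed

end
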